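(* The family $(P_i)_{i\ge1}$ is a basis of the space of primitive elements of ${\cal H}_{ladder}$.
   Context: ${\cal H}_R$ is the commutative polynomial algebra over $\mathbb{Q}$ on isomorphism classes of rooted trees (finite connected simply connected graphs with a root, edges oriented away from the root), a Hopf algebra with coproduct the algebra morphism $\Delta(t)=1\otimes t+t\otimes1+\sum_CP^C(t)\otimes R^C(t)$, the sum over admissible cuts $C$ (nonempty edge sets meeting each root-to-vertex path at most once; $R^C(t)$ = component containing the root, $P^C(t)$ = product of the others). A ladder is a rooted tree in which every vertex has at most one outgoing edge; $l_i$ is the ladder with $i$ vertices, and $\Delta(l_n)=1\otimes l_n+l_n\otimes1+\sum_{j=1}^{n-1}l_j\otimes l_{n-j}$. ${\cal H}_{ladder}$ is the Hopf subalgebra of ${\cal H}_R$ generated by the ladders; its primitive elements are the $x$ with $\Delta(x)=x\otimes1+1\otimes x$. For $n\ge1$ let $\Psi_n(X_1,\dots,X_n)=\sum_{a_1+2a_2+\cdots+na_n=n}\frac{X_1^{a_1}\cdots X_n^{a_n}}{a_1!\cdots a_n!}$. Define $P_1=l_1$ and $P_n=l_n-\Psi_n(P_1,\dots,P_{n-1},0)$ for $n\ge2$. *)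

theory Defs
  imports Complex_Main "HOL-Library.Poly_Mapping"
begin

type_synonym 'v qpoly = "('v \<Rightarrow>\<^sub>0 nat) \<Rightarrow>\<^sub>0 rat"

text \<open>H_ladder = Q[l_1, l_2, ...]; the variable with index i represents l_(i+1).\<close>
type_synonym hladder = "nat qpoly"

text \<open>H_ladder tensor H_ladder = Q[left copies, right copies]; Inl i is l_(i+1) tensor 1,
  Inr i is 1 tensor l_(i+1).\<close>
type_synonym hladder2 = "(nat + nat) qpoly"

definition qvar :: "'v \<Rightarrow> 'v qpoly" where
  "qvar v = Poly_Mapping.single (Poly_Mapping.single v 1) 1"

definition qconst :: "rat \<Rightarrow> 'v qpoly" where
  "qconst c = Poly_Mapping.single 0 c"

definition qsmult :: "rat \<Rightarrow> 'v qpoly \<Rightarrow> 'v qpoly" where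
  "qsmult c p = qconst c * p"

definition qeval :: "('v \<Rightarrow> 'w qpoly) \<Rightarrow> 'v qpoly \<Rightarrow> 'w qpoly" where
  "qeval f p = (\<Sum>m\<in>Poly_Mapping.keys p. qconst (Poly_Mapping.lookup p m) * (\<Prod>x\<in>Poly_Mapping.keys (m::'v \<Rightarrow>\<^sub>0 nat). f x ^ Poly_Mapping.lookup m x))"

definition ladder :: "nat \<Rightarrow> hladder" where
  "ladder n = qvar (n - 1)"

definition lt :: "nat \<Rightarrow> hladder2" where
  "lt j = (if j = 0 then 1 else qvar (Inl (j - 1)))"

definition rt :: "nat \<Rightarrow> hladder2" where
  "rt j = (if j = 0 then 1 else qvar (Inr (j - 1)))"

definition delta_ladder :: "nat \<Rightarrow> hladder2" where
  "delta_ladder n = rt n + lt n + (\<Sum>j=1..n-1. lt j * rt (n - j))"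

definition coprod :: "hladder \<Rightarrow> hladder2" where
  "coprod = qeval (\<lambda>i. delta_ladder (Suc i))"

definition tensor_left :: "hladder \<Rightarrow> hladder2" where
  "tensor_left = qeval (\<lambda>i. qvar (Inl i))"

definition tensor_right :: "hladder \<Rightarrow> hladder2" where
  "tensor_right = qeval (\<lambda>i. qvar (Inr i))"

definition primitive :: "hladder \<Rightarrow> bool" where
  "primitive x \<longleftrightarrow> coprod x = tensor_left x + tensor_right x"

definition psi_index :: "nat \<Rightarrow> (nat \<Rightarrow> nat) set" where
  "psi_index n = {a. (\<forall>k. a k \<noteq> 0 \<longrightarrow> k \<in> {1..n}) \<and> (\<Sum>k=1..n. k * a k) = n}"

definition Psi :: "nat \<Rightarrow> (nat \<Rightarrow> 'v qpoly) \<Rightarrow> 'v qpoly" where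
  "Psi n X = (\<Sum>a\<in>psi_index n.
      qconst (1 / of_nat (\<Prod>k=1..n. fact (a k))) * (\<Prod>k=1..n. X k ^ a k))"

text \<open>Plist n = [P_1, ..., P_n], with P_1 = l_1 and
  P_n = l_n - Psi_n(P_1, ..., P_(n-1), 0).\<close>
primrec Plist :: "nat \<Rightarrow> hladder list" where
  "Plist 0 = []"
| "Plist (Suc n) = Plist n @
     [if n = 0 then ladder 1
      else ladder (Suc n) - Psi (Suc n) (\<lambda>k. if 1 \<le> k \<and> k \<le> n then Plist n ! (k - 1) else 0)]"

definition Pel :: "nat \<Rightarrow> hladder" where
  "Pel n = Plist n ! (n - 1)"

end

theory Submission
  imports Defs "HOL-Computational_Algebra.Formal_Power_Series"
begin

(* Write L = 1 + l_1 t + l_2 t^2 + ... and U = P_1 t + P_2 t^2 + ... as formal power series.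
   The Newton identity n Psi_n(X) = sum_k k X_k Psi_(n-k)(X) says that Psi_n(X) is the n-th
   coefficient of exp(sum_k X_k t^k), and the recursive definition of the P_n says exactly that
   l_n = Psi_n(P_1, ..., P_n); hence L' = U' L. The coproduct of the ladders reads
   Delta(L) = (L (x) 1)(1 (x) L), so applying the algebra morphism Delta to L' = U' L and
   cancelling the invertible series Delta(L) gives Delta(U') = U' (x) 1 + 1 (x) U': every P_n is
   primitive.

   Since P_n = l_n + (a polynomial in l_1, ..., l_(n-1)), the P_n are linearly independent.
   For spanning, evaluate the identity Delta(z) = z (x) 1 + 1 (x) z of a primitive z under algebra
   morphisms H (x) H -> H that substitute scalar multiples of the variables.  If z only involves
   l_1, ..., l_(v+1), two such substitutions show that every monomial of z containing l_(v+1) is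
   l_(v+1) itself; subtracting the right multiple of P_(v+1) removes l_(v+1) altogether, and
   induction on v finishes, the base case being that a primitive element has no constant term. *)

section \<open>Evaluation of polynomials\<close>

lemma qconst_add: "qconst (a + b) = (qconst a + qconst b :: 'v qpoly)"
  by (simp add: qconst_def single_add)

lemma qconst_mult: "qconst (a * b) = (qconst a * qconst b :: 'v qpoly)"
  by (simp add: qconst_def mult_single)

lemma qconst_0 [simp]: "qconst 0 = 0"
  by (simp add: qconst_def)

lemma qconst_1 [simp]: "qconst 1 = 1"
  by (simp add: qconst_def)

lemma qconst_of_nat: "qconst (of_nat n) = of_nat n"
  by (simp add: qconst_def)

lemma qconst_prod: "(\<Prod>x\<in>S. qconst (g x)) = qconst (\<Prod>x\<in>S. g x)"
  by (induction S rule: infinite_finite_induct) (auto simp: qconst_mult)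

lemma qconst_power: "qconst a ^ k = qconst (a ^ k)"
  by (induction k) (auto simp: qconst_mult)

lemma lookup_qconst_mult: "Poly_Mapping.lookup (qconst c * p) m = c * Poly_Mapping.lookup p m"
  by (simp add: qconst_def mult_map_scale_conv_mult[symmetric] map.rep_eq when_def)

lemma qpoly_of_nat_mult_cancel:
  fixes x y :: "'v qpoly"
  assumes "n \<noteq> 0" "of_nat n * x = of_nat n * y"
  shows "x = y"
proof -
  have inv: "qconst (1 / of_nat n) * (of_nat n :: 'v qpoly) = 1"
    using assms(1) by (simp flip: qconst_of_nat qconst_mult)
  have "qconst (1 / of_nat n) * (of_nat n * x) = qconst (1 / of_nat n) * (of_nat n * y)"
    using assms(2) by simp
  then show ?thesis
    by (simp only: mult.assoc[symmetric] inv mult_1)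
qed

lemma qpoly_expansion: "p = (\<Sum>m\<in>Poly_Mapping.keys p. Poly_Mapping.single m (Poly_Mapping.lookup p m))"
proof (rule poly_mapping_eqI)
  fix k
  show "Poly_Mapping.lookup p k = Poly_Mapping.lookup (\<Sum>m\<in>Poly_Mapping.keys p. Poly_Mapping.single m (Poly_Mapping.lookup p m)) k"
    by (cases "k \<in> Poly_Mapping.keys p") (auto simp: lookup_sum lookup_single when_def in_keys_iff)
qed

definition monom_eval :: "('v \<Rightarrow> 'a::comm_monoid_mult) \<Rightarrow> ('v \<Rightarrow>\<^sub>0 nat) \<Rightarrow> 'a" where
  "monom_eval f m = (\<Prod>x\<in>Poly_Mapping.keys m. f x ^ Poly_Mapping.lookup m x)"

lemma monom_eval_superset:
  "finite S \<Longrightarrow> Poly_Mapping.keys m \<subseteq> S \<Longrightarrow> monom_eval f m = (\<Prod>x\<in>S. f x ^ Poly_Mapping.lookup m x)"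
  unfolding monom_eval_def by (rule prod.mono_neutral_left) (auto simp: in_keys_iff)

lemma monom_eval_0 [simp]: "monom_eval f 0 = 1"
  by (simp add: monom_eval_def)

lemma monom_eval_add: "monom_eval f (a + b) = monom_eval f a * monom_eval f b"
proof -
  let ?S = "Poly_Mapping.keys a \<union> Poly_Mapping.keys b"
  have "monom_eval f (a + b) = (\<Prod>x\<in>?S. f x ^ Poly_Mapping.lookup (a + b) x)"
    by (rule monom_eval_superset) (simp_all add: keys_add)
  also have "\<dots> = (\<Prod>x\<in>?S. f x ^ Poly_Mapping.lookup a x) * (\<Prod>x\<in>?S. f x ^ Poly_Mapping.lookup b x)"
    by (simp add: lookup_add power_add prod.distrib)
  also have "\<dots> = monom_eval f a * monom_eval f b"
    by (simp add: monom_eval_superset[of ?S])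
  finally show ?thesis .
qed

lemma monom_eval_single: "monom_eval f (Poly_Mapping.single v k) = f v ^ k"
  by (cases "k = 0") (simp_all add: monom_eval_def)

lemma monom_eval_eq_0_iff:
  fixes f :: "'v \<Rightarrow> 'a::semidom"
  shows "monom_eval f m = 0 \<longleftrightarrow> (\<exists>x\<in>Poly_Mapping.keys m. f x = 0)"
  by (auto simp: monom_eval_def prod_zero_iff in_keys_iff)

lemma qeval_monom_eval: "qeval f p = (\<Sum>m\<in>Poly_Mapping.keys p. qconst (Poly_Mapping.lookup p m) * monom_eval f m)"
  by (simp add: qeval_def monom_eval_def)

lemma qeval_superset:
  "finite S \<Longrightarrow> Poly_Mapping.keys p \<subseteq> S \<Longrightarrow>
   qeval f p = (\<Sum>m\<in>S. qconst (Poly_Mapping.lookup p m) * monom_eval f m)"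
  unfolding qeval_monom_eval by (rule sum.mono_neutral_left) (auto simp: in_keys_iff)

lemma qeval_single: "qeval f (Poly_Mapping.single m c) = qconst c * monom_eval f m"
  by (simp add: qeval_monom_eval)

lemma qeval_0 [simp]: "qeval f 0 = 0"
  by (simp add: qeval_monom_eval)

lemma qeval_qconst [simp]: "qeval f (qconst c) = qconst c"
  by (simp add: qconst_def qeval_single)

lemma qeval_1 [simp]: "qeval f 1 = 1"
  using qeval_qconst[of f 1] by simp

lemma qeval_qvar [simp]: "qeval f (qvar v) = f v"
  by (simp add: qvar_def qeval_single monom_eval_single)

lemma qeval_add: "qeval f (p + q) = qeval f p + qeval f q"
proof -
  let ?S = "Poly_Mapping.keys p \<union> Poly_Mapping.keys q"
  have "qeval f (p + q) = (\<Sum>m\<in>?S. qconst (Poly_Mapping.lookup (p + q) m) * monom_eval f m)"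
    by (rule qeval_superset) (simp_all add: keys_add)
  also have "\<dots> = (\<Sum>m\<in>?S. qconst (Poly_Mapping.lookup p m) * monom_eval f m)
                + (\<Sum>m\<in>?S. qconst (Poly_Mapping.lookup q m) * monom_eval f m)"
    by (simp add: lookup_add qconst_add distrib_right sum.distrib)
  also have "\<dots> = qeval f p + qeval f q"
    by (simp add: qeval_superset[of ?S])
  finally show ?thesis .
qed

lemma qeval_sum: "qeval f (\<Sum>i\<in>I. g i) = (\<Sum>i\<in>I. qeval f (g i))"
  by (induction I rule: infinite_finite_induct) (auto simp: qeval_add)

lemma qeval_uminus: "qeval f (- p) = - qeval f p"
  using qeval_add[of f p "- p"] by (simp add: eq_neg_iff_add_eq_0 add.commute)

lemma qeval_diff: "qeval f (p - q) = qeval f p - qeval f q"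
  using qeval_add[of f p "- q"] by (simp add: qeval_uminus)

lemma qeval_mult: "qeval f (p * q) = qeval f p * qeval f q"
proof -
  have "p * q = (\<Sum>a\<in>Poly_Mapping.keys p. \<Sum>b\<in>Poly_Mapping.keys q.
      Poly_Mapping.single (a + b) (Poly_Mapping.lookup p a * Poly_Mapping.lookup q b))"
    by (subst qpoly_expansion[of p], subst qpoly_expansion[of q])
       (simp add: sum_distrib_left sum_distrib_right mult_single sum.swap[where B = "Poly_Mapping.keys p"])
  then have "qeval f (p * q) = (\<Sum>a\<in>Poly_Mapping.keys p. \<Sum>b\<in>Poly_Mapping.keys q.
      (qconst (Poly_Mapping.lookup p a) * monom_eval f a) * (qconst (Poly_Mapping.lookup q b) * monom_eval f b))"
    by (simp add: qeval_sum qeval_single qconst_mult monom_eval_add mult_ac)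
  also have "\<dots> = qeval f p * qeval f q"
    by (simp add: qeval_monom_eval[of f p] qeval_monom_eval[of f q] sum_distrib_left sum_distrib_right
        sum.swap[where B = "Poly_Mapping.keys p"])
  finally show ?thesis .
qed

lemma qeval_power: "qeval f (p ^ n) = qeval f p ^ n"
  by (induction n) (auto simp: qeval_mult)

lemma qeval_prod: "qeval f (\<Prod>i\<in>I. g i) = (\<Prod>i\<in>I. qeval f (g i))"
  by (induction I rule: infinite_finite_induct) (auto simp: qeval_mult)

lemma qeval_of_nat [simp]: "qeval f (of_nat n) = of_nat n"
  using qeval_qconst[of f "of_nat n"] by (simp add: qconst_of_nat)

lemma qeval_qeval: "qeval g (qeval f p) = qeval (\<lambda>x. qeval g (f x)) p"
  by (simp add: qeval_monom_eval[of f p] qeval_monom_eval[of "\<lambda>x. qeval g (f x)" p]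
      qeval_sum qeval_mult monom_eval_def qeval_prod qeval_power)

lemma monom_eval_qvar: "monom_eval qvar m = Poly_Mapping.single m 1"
proof -
  have pow: "Poly_Mapping.single a (1::rat) ^ k = Poly_Mapping.single (\<Sum>i<k. a) 1" for a :: "'v \<Rightarrow>\<^sub>0 nat" and k
    by (induction k) (auto simp: mult_single algebra_simps)
  have prod: "(\<Prod>x\<in>S. Poly_Mapping.single (g x) (1::rat)) = Poly_Mapping.single (\<Sum>x\<in>S. g x) 1"
    for S and g :: "'v \<Rightarrow> 'v \<Rightarrow>\<^sub>0 nat"
    by (induction S rule: infinite_finite_induct) (auto simp: mult_single)
  have sum: "(\<Sum>i<k. Poly_Mapping.single x (Suc 0)) = Poly_Mapping.single x k" for x :: 'v and k
    by (induction k) (auto simp flip: single_add)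
  have "monom_eval qvar m = Poly_Mapping.single (\<Sum>x\<in>Poly_Mapping.keys m. Poly_Mapping.single x (Poly_Mapping.lookup m x)) 1"
    by (simp add: monom_eval_def qvar_def pow prod sum)
  then show ?thesis
    by (simp flip: qpoly_expansion)
qed

lemma lookup_qeval_scale_vars:
  "Poly_Mapping.lookup (qeval (\<lambda>x. qconst (w x) * qvar x) p) m = monom_eval w m * Poly_Mapping.lookup p m"
proof -
  have "monom_eval (\<lambda>x. qconst (w x) * qvar x) m' = qconst (monom_eval w m') * Poly_Mapping.single m' 1" for m'
    using monom_eval_qvar[of m']
    by (simp add: monom_eval_def power_mult_distrib prod.distrib qconst_power qconst_prod)
  then have "qeval (\<lambda>x. qconst (w x) * qvar x) p =
      (\<Sum>m'\<in>Poly_Mapping.keys p. Poly_Mapping.single m' (Poly_Mapping.lookup p m' * monom_eval w m'))"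
    by (simp add: qeval_monom_eval qconst_def mult_single mult.assoc[symmetric])
  then show ?thesis
    by (cases "m \<in> Poly_Mapping.keys p") (auto simp: lookup_sum lookup_single when_def in_keys_iff)
qed

definition qvars :: "'v qpoly \<Rightarrow> 'v set" where
  "qvars p = (\<Union>m\<in>Poly_Mapping.keys p. Poly_Mapping.keys m)"

lemma finite_qvars: "finite (qvars p)"
  by (simp add: qvars_def)

lemma qvars_0 [simp]: "qvars 0 = {}"
  by (simp add: qvars_def)

lemma qvars_nat_bounded:
  obtains V where "qvars (p :: nat qpoly) \<subseteq> {..<V}"
  using finite_qvars[of p] by (metis finite_nat_set_iff_bounded lessThan_iff subsetI)

lemma qvars_add: "qvars (p + q) \<subseteq> qvars p \<union> qvars q"
  using keys_add[of p q] by (auto simp: qvars_def)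

lemma qvars_uminus [simp]: "qvars (- p) = qvars p"
  by (simp add: qvars_def)

lemma qvars_diff: "qvars (p - q) \<subseteq> qvars p \<union> qvars q"
  using qvars_add[of p "- q"] by simp

lemma qvars_mult: "qvars (p * q) \<subseteq> qvars p \<union> qvars q"
proof
  fix x assume "x \<in> qvars (p * q)"
  then obtain m where m: "m \<in> Poly_Mapping.keys (p * q)" and x: "x \<in> Poly_Mapping.keys m"
    by (auto simp: qvars_def)
  from m keys_mult[of p q] obtain a b where
    "m = a + b" "a \<in> Poly_Mapping.keys p" "b \<in> Poly_Mapping.keys q"
    by blast
  with x keys_add[of a b] show "x \<in> qvars p \<union> qvars q"
    by (auto simp: qvars_def)
qed

lemma qvars_qconst [simp]: "qvars (qconst c) = {}"
  by (simp add: qvars_def qconst_def)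

lemma qvars_qvar: "qvars (qvar v) = {v}"
  by (simp add: qvars_def qvar_def)

lemma qvars_qsmult: "qvars (qsmult c p) \<subseteq> qvars p"
  using qvars_mult[of "qconst c" p] by (simp add: qsmult_def)

lemma qvars_sum: "qvars (\<Sum>i\<in>I. g i) \<subseteq> (\<Union>i\<in>I. qvars (g i))"
proof (induction I rule: infinite_finite_induct)
  case (insert i I)
  then show ?case
    using qvars_add[of "g i" "\<Sum>i\<in>I. g i"] by auto
qed (simp_all add: qvars_def)

lemma qvars_prod: "qvars (\<Prod>i\<in>I. g i) \<subseteq> (\<Union>i\<in>I. qvars (g i))"
proof (induction I rule: infinite_finite_induct)
  case (insert i I)
  then show ?case
    using qvars_mult[of "g i" "\<Prod>i\<in>I. g i"] by auto
qed (simp_all add: qvars_def)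

lemma qvars_power: "qvars (p ^ k) \<subseteq> qvars p"
proof (induction k)
  case 0
  show ?case
    by (metis empty_subsetI power_0 qconst_1 qvars_qconst)
next
  case (Suc k)
  then show ?case
    using qvars_mult[of p "p ^ k"] by auto
qed

lemma qeval_cong:
  assumes "\<And>x. x \<in> qvars p \<Longrightarrow> f x = g x"
  shows "qeval f p = qeval g p"
proof -
  have "f x = g x" if "m \<in> Poly_Mapping.keys p" "x \<in> Poly_Mapping.keys m" for m x
    using assms that by (auto simp: qvars_def)
  then show ?thesis
    unfolding qeval_monom_eval monom_eval_def
    by (intro sum.cong refl arg_cong2[where f = "(*)"] prod.cong) auto
qed

definition linear_coeff :: "'v qpoly \<Rightarrow> 'v \<Rightarrow> rat" where
  "linear_coeff p v = Poly_Mapping.lookup p (Poly_Mapping.single v 1)"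

lemma linear_coeff_add: "linear_coeff (p + q) v = linear_coeff p v + linear_coeff q v"
  by (simp add: linear_coeff_def lookup_add)

lemma linear_coeff_diff: "linear_coeff (p - q) v = linear_coeff p v - linear_coeff q v"
  by (simp add: linear_coeff_def lookup_minus)

lemma linear_coeff_sum: "linear_coeff (\<Sum>i\<in>I. g i) v = (\<Sum>i\<in>I. linear_coeff (g i) v)"
  by (simp add: linear_coeff_def lookup_sum)

lemma linear_coeff_qsmult: "linear_coeff (qsmult c p) v = c * linear_coeff p v"
  by (simp add: linear_coeff_def qsmult_def lookup_qconst_mult)

lemma linear_coeff_qvar [simp]: "linear_coeff (qvar v) v = 1"
  by (simp add: linear_coeff_def qvar_def)

lemma linear_coeff_eq_0: "v \<notin> qvars p \<Longrightarrow> linear_coeff p v = 0"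
  unfolding linear_coeff_def qvars_def
  by (metis UN_I in_keys_iff keys_single one_neq_zero singletonI)

section \<open>The polynomials Psi_n and the Newton identity\<close>

definition Psi_term :: "nat \<Rightarrow> (nat \<Rightarrow> 'v qpoly) \<Rightarrow> (nat \<Rightarrow> nat) \<Rightarrow> 'v qpoly" where
  "Psi_term n X a = (\<Prod>k=1..n. qconst (1 / fact (a k)) * X k ^ a k)"

lemma Psi_eq_sum_Psi_term: "Psi n X = (\<Sum>a\<in>psi_index n. Psi_term n X a)"
  unfolding Psi_def Psi_term_def prod.distrib qconst_prod
  by (simp add: prod_dividef of_nat_prod)

lemma Psi_cong: "(\<And>k. 1 \<le> k \<Longrightarrow> k \<le> n \<Longrightarrow> X k = Y k) \<Longrightarrow> Psi n X = Psi n Y"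
  unfolding Psi_def by (intro sum.cong refl arg_cong2[where f = "(*)"] prod.cong) auto

lemma Psi_0 [simp]: "Psi 0 X = 1"
proof -
  have "psi_index 0 = {\<lambda>_. 0}"
    by (auto simp: psi_index_def)
  then show ?thesis
    by (simp add: Psi_def)
qed

lemma qvars_Psi: "qvars (Psi n X) \<subseteq> (\<Union>k\<in>{1..n}. qvars (X k))"
proof -
  let ?B = "\<Union>k\<in>{1..n}. qvars (X k)"
  have "qvars (qconst c * (\<Prod>k=1..n. X k ^ a k)) \<subseteq> ?B" for c a
  proof -
    have "qvars (qconst c * (\<Prod>k=1..n. X k ^ a k)) \<subseteq> qvars (\<Prod>k=1..n. X k ^ a k)"
      using qvars_mult[of "qconst c"] by simp
    also have "\<dots> \<subseteq> (\<Union>k\<in>{1..n}. qvars (X k ^ a k))"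
      by (rule qvars_prod)
    also have "\<dots> \<subseteq> ?B"
      by (intro UN_mono order.refl qvars_power)
    finally show ?thesis .
  qed
  then have "(\<Union>a\<in>psi_index n. qvars (qconst (1 / of_nat (\<Prod>k=1..n. fact (a k))) * (\<Prod>k=1..n. X k ^ a k))) \<subseteq> ?B"
    by (intro UN_least)
  then show ?thesis
    unfolding Psi_def using qvars_sum by (rule order_trans[rotated])
qed

lemma psi_index_weight_le:
  assumes "a \<in> psi_index n" "a k \<noteq> 0"
  shows "k \<in> {1..n}" "k * a k \<le> n"
proof -
  from assms show k: "k \<in> {1..n}"
    by (simp add: psi_index_def)
  have "k * a k \<le> (\<Sum>j=1..n. j * a j)"
    using k by (intro member_le_sum) auto
  with assms(1) show "k * a k \<le> n"
    by (simp add: psi_index_def)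
qed

lemma psi_index_iff:
  assumes "m \<le> N"
  shows "a \<in> psi_index m \<longleftrightarrow> (\<forall>k. a k \<noteq> 0 \<longrightarrow> k \<in> {1..N}) \<and> (\<Sum>k=1..N. k * a k) = m"
proof
  assume "a \<in> psi_index m"
  then have support: "\<forall>k. a k \<noteq> 0 \<longrightarrow> k \<in> {1..m}" and weight: "(\<Sum>k=1..m. k * a k) = m"
    by (simp_all add: psi_index_def)
  have "(\<Sum>k=1..N. k * a k) = (\<Sum>k=1..m. k * a k)"
    using assms support by (intro sum.mono_neutral_right) auto
  moreover have "k \<in> {1..N}" if "a k \<noteq> 0" for k
    using support that assms by fastforce
  ultimately show "(\<forall>k. a k \<noteq> 0 \<longrightarrow> k \<in> {1..N}) \<and> (\<Sum>k=1..N. k * a k) = m"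
    using weight by simp
next
  assume a: "(\<forall>k. a k \<noteq> 0 \<longrightarrow> k \<in> {1..N}) \<and> (\<Sum>k=1..N. k * a k) = m"
  have support: "k \<in> {1..m}" if "a k \<noteq> 0" for k
  proof -
    from a that have k: "k \<in> {1..N}"
      by auto
    have "k \<le> k * a k"
      using that by simp
    also have "\<dots> \<le> (\<Sum>k=1..N. k * a k)"
      using k by (intro member_le_sum) auto
    finally show ?thesis
      using a k by auto
  qed
  then have "a k = 0" if "k \<notin> {1..m}" for k
    using that by blast
  then have "(\<Sum>k=1..N. k * a k) = (\<Sum>k=1..m. k * a k)"
    using assms by (intro sum.mono_neutral_right) auto
  with a support show "a \<in> psi_index m"
    by (auto simp: psi_index_def)
qed

lemma finite_psi_index: "finite (psi_index n)"
proof (rule finite_subset)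
  show "psi_index n \<subseteq> {a. \<forall>k. (k \<in> {1..n} \<longrightarrow> a k \<in> {0..n}) \<and> (k \<notin> {1..n} \<longrightarrow> a k = 0)}"
  proof (intro subsetI CollectI allI conjI impI)
    fix a k assume a: "a \<in> psi_index n"
    show "a k \<in> {0..n}"
    proof (cases "a k = 0")
      case False
      with psi_index_weight_le[OF a] have "k \<in> {1..n}" "k * a k \<le> n"
        by auto
      then show ?thesis
        by (metis atLeastAtMost_iff atLeast0AtMost atMost_iff le_trans mult_le_mono1 mult_1)
    qed simp
    show "a k = 0" if "k \<notin> {1..n}"
      using a that by (auto simp: psi_index_def)
  qed
  show "finite {a. \<forall>k. (k \<in> {1..n} \<longrightarrow> a k \<in> {0..n}) \<and> (k \<notin> {1..n} \<longrightarrow> a k = (0::nat))}"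
    by (rule finite_set_of_finite_funs) auto
qed

lemma Psi_term_extend:
  assumes "\<forall>k. a k \<noteq> 0 \<longrightarrow> k \<in> {1..m}" "m \<le> n"
  shows "Psi_term n X a = Psi_term m X a"
proof -
  have "a k = 0" if "k \<in> {1..n} - {1..m}" for k
    using assms(1) that by blast
  then show ?thesis
    unfolding Psi_term_def using assms(2) by (intro prod.mono_neutral_right) auto
qed

lemma Psi_term_Suc_exponent:
  assumes k: "k \<in> {1..n}"
  shows "of_nat (Suc (b k)) * Psi_term n X (b(k := Suc (b k))) = X k * Psi_term n X b"
proof -
  let ?R = "\<Prod>j\<in>{1..n} - {k}. qconst (1 / fact (b j)) * X j ^ b j"
  have coeff: "of_nat (Suc j) * qconst (1 / fact (Suc j)) = (qconst (1 / fact j) :: 'v qpoly)" for j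
    by (simp add: divide_simps flip: qconst_of_nat qconst_mult)
  have "Psi_term n X (b(k := Suc (b k))) = qconst (1 / fact (Suc (b k))) * X k ^ Suc (b k) * ?R"
    unfolding Psi_term_def by (subst prod.remove[OF _ k]) (auto intro!: prod.cong)
  then have "of_nat (Suc (b k)) * Psi_term n X (b(k := Suc (b k)))
      = (of_nat (Suc (b k)) * qconst (1 / fact (Suc (b k)))) * X k ^ Suc (b k) * ?R"
    by (simp only: mult.assoc)
  also have "\<dots> = X k * (qconst (1 / fact (b k)) * X k ^ b k * ?R)"
    by (simp only: coeff power_Suc mult_ac)
  also have "qconst (1 / fact (b k)) * X k ^ b k * ?R = Psi_term n X b"
    unfolding Psi_term_def by (subst prod.remove[OF _ k]) auto
  finally show ?thesis .
qed

lemma sum_weight_bump: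
  assumes "finite A" "k \<in> A"
  shows "(\<Sum>j\<in>A. j * (b(k := Suc (b k))) j) = (\<Sum>j\<in>A. j * b j) + k"
proof -
  have "(\<Sum>j\<in>A - {k}. j * (b(k := Suc (b k))) j) = (\<Sum>j\<in>A - {k}. j * b j)"
    by (intro sum.cong) auto
  then show ?thesis
    using assms by (simp add: sum.remove)
qed

lemma psi_index_bump_iff:
  assumes k: "k \<in> {1..n}"
  shows "b(k := Suc (b k)) \<in> psi_index n \<longleftrightarrow> b \<in> psi_index (n - k)"
proof -
  have "(\<forall>j. (b(k := Suc (b k))) j \<noteq> 0 \<longrightarrow> j \<in> {1..n}) \<longleftrightarrow> (\<forall>j. b j \<noteq> 0 \<longrightarrow> j \<in> {1..n})"
    using k by auto
  moreover have "(\<Sum>j=1..n. j * (b(k := Suc (b k))) j) = (\<Sum>j=1..n. j * b j) + k"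
    using k by (intro sum_weight_bump) auto
  then have "(\<Sum>j=1..n. j * (b(k := Suc (b k))) j) = n \<longleftrightarrow> (\<Sum>j=1..n. j * b j) = n - k"
    using k by auto
  ultimately show ?thesis
    using psi_index_iff[of n n] psi_index_iff[of "n - k" n] by simp
qed

(* Lowering the multiplicity of the part k by one is a bijection onto psi_index (n - k). *)
lemma sum_multiplicity_Psi_term:
  assumes k: "k \<in> {1..n}"
  shows "(\<Sum>a\<in>psi_index n. of_nat (a k) * Psi_term n X a) = X k * Psi (n - k) X"
proof -
  let ?bump = "\<lambda>b::nat \<Rightarrow> nat. b(k := Suc (b k))"
  have "(\<Sum>a\<in>psi_index n. of_nat (a k) * Psi_term n X a)
      = (\<Sum>a\<in>{a \<in> psi_index n. a k \<noteq> 0}. of_nat (a k) * Psi_term n X a)"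
    by (rule sum.mono_neutral_right) (auto simp: finite_psi_index)
  also have "\<dots> = (\<Sum>b\<in>psi_index (n - k). of_nat (Suc (b k)) * Psi_term n X (?bump b))"
  proof (rule sum.reindex_bij_witness[where i = ?bump and j = "\<lambda>a. a(k := a k - 1)"])
    fix a assume a: "a \<in> {a \<in> psi_index n. a k \<noteq> 0}"
    then have bump: "?bump (a(k := a k - 1)) = a"
      by auto
    then show "?bump (a(k := a k - 1)) = a" .
    show "a(k := a k - 1) \<in> psi_index (n - k)"
      using a psi_index_bump_iff[OF k, of "a(k := a k - 1)"] by (simp add: bump)
    show "of_nat (Suc ((a(k := a k - 1)) k)) * Psi_term n X (?bump (a(k := a k - 1))) = of_nat (a k) * Psi_term n X a"
      using a by (simp add: bump)
  next
    fix b assume "b \<in> psi_index (n - k)"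
    then show "(?bump b)(k := ?bump b k - 1) = b" "?bump b \<in> {a \<in> psi_index n. a k \<noteq> 0}"
      using psi_index_bump_iff[OF k] by auto
  qed
  also have "\<dots> = (\<Sum>b\<in>psi_index (n - k). X k * Psi_term (n - k) X b)"
  proof (rule sum.cong[OF refl])
    fix b assume "b \<in> psi_index (n - k)"
    then have "Psi_term n X b = Psi_term (n - k) X b"
      by (intro Psi_term_extend) (auto simp: psi_index_def)
    then show "of_nat (Suc (b k)) * Psi_term n X (?bump b) = X k * Psi_term (n - k) X b"
      using Psi_term_Suc_exponent[OF k, of b X] by simp
  qed
  also have "\<dots> = X k * Psi (n - k) X"
    by (simp add: Psi_eq_sum_Psi_term sum_distrib_left)
  finally show ?thesis .
qed

lemma Psi_newton: "of_nat n * Psi n X = (\<Sum>k=1..n. of_nat k * X k * Psi (n - k) X)"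
proof -
  have "of_nat n * Psi n X = (\<Sum>a\<in>psi_index n. of_nat n * Psi_term n X a)"
    by (simp add: Psi_eq_sum_Psi_term sum_distrib_left)
  also have "\<dots> = (\<Sum>a\<in>psi_index n. \<Sum>k=1..n. of_nat k * (of_nat (a k) * Psi_term n X a))"
  proof (rule sum.cong[OF refl])
    fix a assume "a \<in> psi_index n"
    then have "of_nat n * Psi_term n X a = of_nat (\<Sum>k=1..n. k * a k) * Psi_term n X a"
      by (simp add: psi_index_def)
    also have "\<dots> = (\<Sum>k=1..n. of_nat k * (of_nat (a k) * Psi_term n X a))"
      by (simp add: of_nat_sum sum_distrib_right mult.assoc)
    finally show "of_nat n * Psi_term n X a = (\<Sum>k=1..n. of_nat k * (of_nat (a k) * Psi_term n X a))" .
  qed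
  also have "\<dots> = (\<Sum>k=1..n. of_nat k * (\<Sum>a\<in>psi_index n. of_nat (a k) * Psi_term n X a))"
    by (subst sum.swap) (simp add: sum_distrib_left)
  also have "\<dots> = (\<Sum>k=1..n. of_nat k * X k * Psi (n - k) X)"
    by (intro sum.cong refl) (simp add: sum_multiplicity_Psi_term mult.assoc)
  finally show ?thesis .
qed

lemma Psi_zero:
  assumes "n \<noteq> 0"
  shows "Psi n (\<lambda>_. 0 :: 'v qpoly) = 0"
proof -
  have "of_nat n * Psi n (\<lambda>_. 0 :: 'v qpoly) = of_nat n * 0"
    by (simp add: Psi_newton)
  then show ?thesis
    by (rule qpoly_of_nat_mult_cancel[OF assms])
qed

lemma Psi_split:
  assumes n: "n \<noteq> 0"
  shows "Psi n X = Psi n (X(n := 0)) + X n"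
proof -
  let ?A0 = "{a \<in> psi_index n. a n = 0}" and ?A1 = "{a \<in> psi_index n. a n \<noteq> 0}"
  have top: "a n = 1" if "a \<in> ?A1" for a
  proof -
    have "n * a n \<le> n * 1"
      using that psi_index_weight_le(2)[of a n n] by simp
    then show ?thesis
      using that n by simp
  qed
  have split: "(\<Sum>a\<in>psi_index n. f a) = (\<Sum>a\<in>?A0. f a) + (\<Sum>a\<in>?A1. f a)" for f :: "_ \<Rightarrow> 'v qpoly"
  proof -
    have "psi_index n = ?A0 \<union> ?A1"
      by auto
    then have "(\<Sum>a\<in>psi_index n. f a) = (\<Sum>a\<in>?A0 \<union> ?A1. f a)"
      by (rule arg_cong)
    also have "\<dots> = (\<Sum>a\<in>?A0. f a) + (\<Sum>a\<in>?A1. f a)"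
      by (rule sum.union_disjoint) (auto simp: finite_psi_index)
    finally show ?thesis .
  qed
  have Psi_eq: "Psi n Y = (\<Sum>a\<in>?A0. Psi_term n Y a) + Y n" for Y
  proof -
    have "(\<Sum>a\<in>?A1. Psi_term n Y a) = (\<Sum>a\<in>?A1. of_nat (a n) * Psi_term n Y a)"
    proof (rule sum.cong[OF refl])
      fix a assume "a \<in> ?A1"
      then have "a n = 1"
        by (rule top)
      then show "Psi_term n Y a = of_nat (a n) * Psi_term n Y a"
        by simp
    qed
    also have "\<dots> = (\<Sum>a\<in>psi_index n. of_nat (a n) * Psi_term n Y a)"
      by (simp add: split)
    also have "\<dots> = Y n"
      using n by (simp add: sum_multiplicity_Psi_term)
    finally show ?thesis
      by (simp add: Psi_eq_sum_Psi_term split)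
  qed
  have "Psi_term n (X(n := 0)) a = Psi_term n X a" if "a \<in> ?A0" for a
    unfolding Psi_term_def using that by (intro prod.cong) auto
  then show ?thesis
    using Psi_eq[of X] Psi_eq[of "X(n := 0)"] by simp
qed

lemma fps_deriv_Psi:
  "fps_deriv (Abs_fps (\<lambda>n. Psi n X)) = fps_deriv (Abs_fps X) * Abs_fps (\<lambda>n. Psi n X)"
proof (rule fps_ext)
  fix m
  have "fps_nth (fps_deriv (Abs_fps (\<lambda>n. Psi n X))) m = of_nat (Suc m) * Psi (Suc m) X"
    by simp
  also have "\<dots> = (\<Sum>k=Suc 0..Suc m. of_nat k * X k * Psi (Suc m - k) X)"
    using Psi_newton[of "Suc m" X] by simp
  also have "\<dots> = (\<Sum>i=0..m. of_nat (Suc i) * X (Suc i) * Psi (Suc m - Suc i) X)"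
    by (rule sum.shift_bounds_cl_Suc_ivl)
  also have "\<dots> = fps_nth (fps_deriv (Abs_fps X) * Abs_fps (\<lambda>n. Psi n X)) m"
    by (simp add: fps_mult_nth)
  finally show "fps_nth (fps_deriv (Abs_fps (\<lambda>n. Psi n X))) m = fps_nth (fps_deriv (Abs_fps X) * Abs_fps (\<lambda>n. Psi n X)) m" .
qed

lemma length_Plist [simp]: "length (Plist n) = n"
  by (induction n) auto

lemma Plist_nth_Pel: "k < n \<Longrightarrow> Plist n ! k = Pel (Suc k)"
proof (induction n)
  case (Suc n)
  then show ?case
    by (cases "k = n") (auto simp: Pel_def nth_append)
qed simp

lemma Pel_Suc: "Pel (Suc n) = ladder (Suc n) - Psi (Suc n) (Pel(Suc n := 0))"
proof -
  have "Psi (Suc n) (Pel(Suc n := 0)) = Psi (Suc n) (\<lambda>k. if 1 \<le> k \<and> k \<le> n then Plist n ! (k - 1) else 0)"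
    by (rule Psi_cong) (auto simp: Plist_nth_Pel)
  moreover have "Psi (Suc 0) (Pel(Suc 0 := 0)) = 0"
    using Psi_zero[of "Suc 0"] by (simp add: Psi_cong[of "Suc 0" "Pel(Suc 0 := 0)" "\<lambda>_. 0"])
  ultimately show ?thesis
    by (cases "n = 0") (simp_all add: Pel_def nth_append)
qed

definition ladder_seq :: "nat \<Rightarrow> hladder" where
  "ladder_seq j = (if j = 0 then 1 else ladder j)"

lemma Psi_Pel: "Psi n Pel = ladder_seq n"
proof (cases n)
  case (Suc m)
  then show ?thesis
    using Psi_split[of n Pel] Pel_Suc[of m] by (simp add: ladder_seq_def)
qed (simp add: ladder_seq_def)

lemma qvars_Psi_lower_Pel:
  assumes "\<And>j. j < n \<Longrightarrow> qvars (Pel (Suc j)) \<subseteq> {..j}"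
  shows "qvars (Psi (Suc n) (Pel(Suc n := 0))) \<subseteq> {..<n}"
proof -
  have "qvars (Psi (Suc n) (Pel(Suc n := 0))) \<subseteq> (\<Union>k\<in>{1..Suc n}. qvars ((Pel(Suc n := 0)) k))"
    by (rule qvars_Psi)
  also have "\<dots> \<subseteq> {..<n}"
  proof (intro UN_least)
    fix k assume k: "k \<in> {1..Suc n}"
    show "qvars ((Pel(Suc n := 0)) k) \<subseteq> {..<n}"
    proof (cases "k = Suc n")
      case False
      with k obtain j where "k = Suc j" "j < n"
        by (cases k) auto
      with assms show ?thesis
        by fastforce
    qed simp
  qed
  finally show ?thesis .
qed

lemma qvars_Pel: "qvars (Pel (Suc n)) \<subseteq> {..n}"
proof (induction n rule: less_induct)
  case (less n)
  then have "qvars (Psi (Suc n) (Pel(Suc n := 0))) \<subseteq> {..<n}"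
    by (intro qvars_Psi_lower_Pel)
  then show ?case
    using qvars_diff[of "qvar n" "Psi (Suc n) (Pel(Suc n := 0))"]
    by (auto simp: Pel_Suc ladder_def qvars_qvar)
qed

lemma linear_coeff_Pel: "linear_coeff (Pel (Suc n)) n = 1"
proof -
  have "qvars (Psi (Suc n) (Pel(Suc n := 0))) \<subseteq> {..<n}"
    by (intro qvars_Psi_lower_Pel qvars_Pel)
  then have "linear_coeff (Psi (Suc n) (Pel(Suc n := 0))) n = 0"
    by (intro linear_coeff_eq_0) auto
  then show ?thesis
    by (simp add: Pel_Suc ladder_def linear_coeff_diff)
qed

section \<open>Primitivity of the P_n\<close>

lemma fps_mult_right_cancel:
  fixes f g c :: "'a::comm_ring_1 fps"
  assumes "f * c = g * c" "fps_nth c 0 = 1"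
  shows "f = g"
proof -
  have "c * fps_right_inverse c 1 = 1"
    using assms(2) by (intro fps_right_inverse) simp
  then show ?thesis
    using arg_cong[OF assms(1), of "\<lambda>h. h * fps_right_inverse c 1"] by (simp add: mult.assoc)
qed

definition fps_map :: "('a \<Rightarrow> 'b) \<Rightarrow> 'a fps \<Rightarrow> 'b fps" where
  "fps_map h f = Abs_fps (\<lambda>n. h (fps_nth f n))"

lemma fps_map_nth [simp]: "fps_nth (fps_map h f) n = h (fps_nth f n)"
  by (simp add: fps_map_def)

lemma fps_map_qeval_mult: "fps_map (qeval g) (f1 * f2) = fps_map (qeval g) f1 * fps_map (qeval g) f2"
  by (simp add: fps_eq_iff fps_mult_nth qeval_sum qeval_mult)

lemma fps_map_qeval_deriv: "fps_map (qeval g) (fps_deriv f) = fps_deriv (fps_map (qeval g) f)"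
  by (simp add: fps_eq_iff qeval_mult qeval_add)

lemma coprod_ladder_seq:
  "coprod (ladder_seq n) = (\<Sum>i=0..n. tensor_left (ladder_seq i) * tensor_right (ladder_seq (n - i)))"
proof -
  have tensor: "tensor_left (ladder_seq i) = lt i" "tensor_right (ladder_seq i) = rt i" for i
    by (simp_all add: tensor_left_def tensor_right_def ladder_seq_def ladder_def lt_def rt_def)
  show ?thesis
  proof (cases n)
    case (Suc m)
    have "coprod (ladder_seq n) = rt (Suc m) + lt (Suc m) + (\<Sum>j=1..m. lt j * rt (Suc m - j))"
      by (simp add: coprod_def ladder_seq_def ladder_def Suc delta_ladder_def)
    also have "\<dots> = (\<Sum>i=0..n. lt i * rt (n - i))"
      unfolding Suc sum.atLeast0_atMost_Suc by (simp add: sum.atLeast_Suc_atMost[of 0 m] lt_def rt_def)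
    finally show ?thesis
      by (simp add: tensor)
  qed (simp add: coprod_def ladder_seq_def tensor_left_def tensor_right_def)
qed

lemma fps_deriv_ladder_series: "fps_deriv (Abs_fps ladder_seq) = fps_deriv (Abs_fps Pel) * Abs_fps ladder_seq"
  using fps_deriv_Psi[of Pel] by (simp add: Psi_Pel)

lemma coprod_ladder_series:
  "fps_map coprod (Abs_fps ladder_seq) = fps_map tensor_left (Abs_fps ladder_seq) * fps_map tensor_right (Abs_fps ladder_seq)"
  by (simp add: fps_eq_iff fps_mult_nth coprod_ladder_seq)

lemma fps_map_qeval_deriv_eq:
  assumes "fps_deriv L = fps_deriv U * L"
  shows "fps_deriv (fps_map (qeval g) L) = fps_deriv (fps_map (qeval g) U) * fps_map (qeval g) L"
proof -
  have "fps_deriv (fps_map (qeval g) L) = fps_map (qeval g) (fps_deriv U * L)"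
    by (simp only: fps_map_qeval_deriv[symmetric] assms)
  then show ?thesis
    by (simp only: fps_map_qeval_mult fps_map_qeval_deriv)
qed

lemma primitive_Pel: "primitive (Pel (Suc m))"
proof -
  define L where "L = Abs_fps ladder_seq"
  \<comment> \<open>The constant term Pel 0 of U is a junk value; only the derivative of U is used.\<close>
  define U where "U = Abs_fps Pel"
  define A where "A = fps_map tensor_left L"
  define B where "B = fps_map tensor_right L"
  have L_eq: "fps_deriv L = fps_deriv U * L"
    unfolding L_def U_def by (rule fps_deriv_ladder_series)
  have dA: "fps_deriv A = fps_deriv (fps_map tensor_left U) * A"
    unfolding A_def tensor_left_def using L_eq by (rule fps_map_qeval_deriv_eq)
  have dB: "fps_deriv B = fps_deriv (fps_map tensor_right U) * B"
    unfolding B_def tensor_right_def using L_eq by (rule fps_map_qeval_deriv_eq)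
  have "fps_map coprod L = A * B"
    by (simp add: A_def B_def L_def coprod_ladder_series)
  then have "fps_deriv (fps_map coprod U) * (A * B) = fps_deriv (A * B)"
    using fps_map_qeval_deriv_eq[OF L_eq, of "\<lambda>i. delta_ladder (Suc i)"] by (simp only: coprod_def)
  also have "\<dots> = (fps_deriv (fps_map tensor_left U) + fps_deriv (fps_map tensor_right U)) * (A * B)"
    by (simp only: fps_deriv_mult dA dB algebra_simps)
  finally have "fps_deriv (fps_map coprod U) = fps_deriv (fps_map tensor_left U) + fps_deriv (fps_map tensor_right U)"
    by (rule fps_mult_right_cancel) (simp add: A_def B_def L_def ladder_seq_def tensor_left_def tensor_right_def)
  then have "fps_nth (fps_deriv (fps_map coprod U)) m
      = fps_nth (fps_deriv (fps_map tensor_left U) + fps_deriv (fps_map tensor_right U)) m"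
    by (rule arg_cong)
  then have "of_nat (Suc m) * coprod (Pel (Suc m))
      = of_nat (Suc m) * (tensor_left (Pel (Suc m)) + tensor_right (Pel (Suc m)))"
    by (simp add: U_def distrib_left)
  then show ?thesis
    unfolding primitive_def by (rule qpoly_of_nat_mult_cancel[rotated]) simp
qed

section \<open>Linear independence and spanning\<close>

lemma Pel_linear_independent:
  "(\<Sum>i=1..n. qsmult (c i) (Pel i)) = 0 \<Longrightarrow> \<forall>i\<in>{1..n}. c i = 0"
proof (induction n)
  case (Suc n)
  have "linear_coeff (Pel i) n = 0" if "i \<in> {1..n}" for i
  proof -
    from that obtain j where "i = Suc j" "j < n"
      by (cases i) auto
    with qvars_Pel[of j] show ?thesis
      by (intro linear_coeff_eq_0) auto
  qed
  then have "linear_coeff (\<Sum>i=1..Suc n. qsmult (c i) (Pel i)) n = c (Suc n)"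
    by (simp add: linear_coeff_add linear_coeff_sum linear_coeff_qsmult linear_coeff_Pel)
  with Suc.prems have "c (Suc n) = 0"
    by (simp add: linear_coeff_def)
  with Suc.prems have "\<forall>i\<in>{1..n}. c i = 0"
    by (intro Suc.IH) (simp add: qsmult_def)
  with \<open>c (Suc n) = 0\<close> show ?case
    by (auto simp: le_Suc_eq)
qed simp

lemma primitive_diff: "primitive p \<Longrightarrow> primitive q \<Longrightarrow> primitive (p - q)"
  unfolding primitive_def coprod_def tensor_left_def tensor_right_def
  by (simp add: qeval_diff algebra_simps)

lemma primitive_qsmult: "primitive p \<Longrightarrow> primitive (qsmult c p)"
  unfolding primitive_def coprod_def tensor_left_def tensor_right_def
  by (simp add: qsmult_def qeval_mult distrib_left)

lemma qeval_delta_ladder: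
  "qeval r (delta_ladder (Suc i)) = r (Inr i) + r (Inl i) + (\<Sum>j=1..i. r (Inl (j - 1)) * r (Inr (i - j)))"
proof -
  have "qeval r (lt j * rt (Suc i - j)) = r (Inl (j - 1)) * r (Inr (i - j))" if "j \<in> {1..i}" for j
    using that by (simp add: lt_def rt_def qeval_mult Suc_diff_le)
  then show ?thesis
    by (simp add: delta_ladder_def qeval_add qeval_sum lt_def rt_def)
qed

(* Apply to Delta(z) = z (x) 1 + 1 (x) z the algebra morphism sending l_(i+1) (x) 1 to f i and
   1 (x) l_(i+1) to g i: the hypothesis on f and g kills the cross terms of Delta(l_(i+1)) for
   every variable of z. *)
lemma primitive_qeval_add:
  fixes f g :: "nat \<Rightarrow> 'w qpoly"
  assumes prim: "primitive z" and vars: "qvars z \<subseteq> {..<V}"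
    and cross: "\<And>a b. Suc (a + b) < V \<Longrightarrow> f a * g b = 0"
  shows "qeval (\<lambda>i. f i + g i) z = qeval f z + qeval g z"
proof -
  define r where "r = case_sum f g"
  have "qeval r (coprod z) = qeval (\<lambda>i. qeval r (delta_ladder (Suc i))) z"
    by (simp add: coprod_def qeval_qeval)
  also have "\<dots> = qeval (\<lambda>i. f i + g i) z"
  proof (rule qeval_cong)
    fix i assume "i \<in> qvars z"
    with vars have "(\<Sum>j=1..i. f (j - 1) * g (i - j)) = 0"
      by (intro sum.neutral ballI cross) auto
    then show "qeval r (delta_ladder (Suc i)) = f i + g i"
      by (simp add: qeval_delta_ladder r_def)
  qed
  finally show ?thesis
    using prim by (simp add: primitive_def qeval_add r_def tensor_left_def tensor_right_def qeval_qeval)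
qed

lemma primitive_monom_eval_add:
  fixes u w :: "nat \<Rightarrow> rat"
  assumes "primitive z" "qvars z \<subseteq> {..<V}" "\<And>a b. Suc (a + b) < V \<Longrightarrow> u a * w b = 0"
    and m: "m \<in> Poly_Mapping.keys z"
  shows "monom_eval (\<lambda>i. u i + w i) m = monom_eval u m + monom_eval w m"
proof -
  have "qeval (\<lambda>i. qconst (u i) * qvar i + qconst (w i) * qvar i) z
      = qeval (\<lambda>i. qconst (u i) * qvar i) z + qeval (\<lambda>i. qconst (w i) * qvar i) z"
    using assms(1,2) by (rule primitive_qeval_add) (simp add: assms(3) qconst_mult[symmetric] mult_ac)
  then have "Poly_Mapping.lookup (qeval (\<lambda>i. qconst (u i + w i) * qvar i) z) m
      = Poly_Mapping.lookup (qeval (\<lambda>i. qconst (u i) * qvar i) z + qeval (\<lambda>i. qconst (w i) * qvar i) z) m"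
    by (simp add: qconst_add distrib_right)
  with m show ?thesis
    by (simp add: lookup_add lookup_qeval_scale_vars in_keys_iff flip: distrib_right)
qed

lemma primitive_constant_coeff:
  assumes prim: "primitive z"
  shows "Poly_Mapping.lookup z 0 = 0"
proof (rule ccontr)
  assume "Poly_Mapping.lookup z 0 \<noteq> 0"
  then have zero: "0 \<in> Poly_Mapping.keys z"
    by (simp add: in_keys_iff)
  obtain V where vars: "qvars z \<subseteq> {..<V}"
    by (rule qvars_nat_bounded)
  have "monom_eval (\<lambda>_. 0 + 0 :: rat) 0 = monom_eval (\<lambda>_. 0 :: rat) 0 + monom_eval (\<lambda>_. 0 :: rat) 0"
    using primitive_monom_eval_add[where u = "\<lambda>_. 0" and w = "\<lambda>_. 0", OF prim vars _ zero] by simp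
  then show False
    by simp
qed

(* The weights (1 - [i = v], [i = v]) show that m is a power of the variable v, and the weights
   ([i = v], [i = v]) that its exponent k satisfies 2^k = 2. *)
lemma primitive_monomial_linear:
  assumes prim: "primitive z" and vars: "qvars z \<subseteq> {..v}"
    and m: "m \<in> Poly_Mapping.keys z" and v: "v \<in> Poly_Mapping.keys m"
  shows "m = Poly_Mapping.single v 1"
proof -
  have vars': "qvars z \<subseteq> {..<Suc v}"
    using vars by auto
  let ?ind = "\<lambda>i. of_bool (i = v) :: rat"
  have "monom_eval (\<lambda>i. (1 - ?ind i) + ?ind i) m = monom_eval (\<lambda>i. 1 - ?ind i) m + monom_eval ?ind m"
    using prim vars' _ m by (rule primitive_monom_eval_add[where u = "\<lambda>i. 1 - ?ind i" and w = ?ind]) auto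
  moreover have "monom_eval (\<lambda>i. (1 - ?ind i) + ?ind i) m = 1"
    by (simp add: monom_eval_def)
  moreover have "monom_eval (\<lambda>i. 1 - ?ind i) m = 0"
    using v by (auto simp: monom_eval_eq_0_iff)
  ultimately have "monom_eval ?ind m \<noteq> 0"
    by simp
  then have "\<forall>x\<in>Poly_Mapping.keys m. ?ind x \<noteq> 0"
    using monom_eval_eq_0_iff[of ?ind m] by blast
  with v have keys: "Poly_Mapping.keys m = {v}"
    by (metis (mono_tags) of_bool_eq_0_iff singletonI subsetI subset_singletonD empty_iff)
  have "monom_eval (\<lambda>i. ?ind i + ?ind i) m = monom_eval ?ind m + monom_eval ?ind m"
    using prim vars' _ m by (rule primitive_monom_eval_add[where u = ?ind and w = ?ind]) auto
  then have "(2::rat) ^ Poly_Mapping.lookup m v = 2"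
    by (simp add: monom_eval_def keys)
  then have "Poly_Mapping.lookup m v = 1"
    using power_inject_exp[of "2::rat" _ 1] by simp
  with keys show ?thesis
    by (metis in_keys_iff lookup_single_eq lookup_single_not_eq poly_mapping_eqI singletonD)
qed

lemma primitive_in_span_Pel:
  assumes "primitive z" "qvars z \<subseteq> {..<V}"
  shows "\<exists>c. z = (\<Sum>i=1..V. qsmult (c i) (Pel i))"
  using assms
proof (induction V arbitrary: z)
  case 0
  then have "Poly_Mapping.keys z \<subseteq> {0}"
    by (auto simp: qvars_def)
  with primitive_constant_coeff[OF "0.prems"(1)] have "z = 0"
    by (metis in_keys_iff keys_eq_empty subset_singletonD singletonI)
  then show ?case
    by simp
next
  case (Suc V)
  define a where "a = linear_coeff z V"
  define y where "y = z - qsmult a (Pel (Suc V))"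
  have prim: "primitive y"
    unfolding y_def by (intro primitive_diff primitive_qsmult Suc.prems primitive_Pel)
  have vars: "qvars y \<subseteq> {..V}"
    unfolding y_def using Suc.prems(2) qvars_diff qvars_qsmult qvars_Pel by fastforce
  have "linear_coeff y V = 0"
    by (simp add: y_def a_def linear_coeff_diff linear_coeff_qsmult linear_coeff_Pel)
  then have "V \<notin> qvars y"
    using primitive_monomial_linear[OF prim vars] by (auto simp: qvars_def linear_coeff_def in_keys_iff)
  with vars have "qvars y \<subseteq> {..<V}"
    by (auto simp: subset_iff le_less)
  with prim obtain c where c: "y = (\<Sum>i=1..V. qsmult (c i) (Pel i))"
    using Suc.IH by blast
  have "(\<Sum>i=1..V. qsmult ((c(Suc V := a)) i) (Pel i)) = y"
    unfolding c by (intro sum.cong) auto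
  then have "z = (\<Sum>i=1..Suc V. qsmult ((c(Suc V := a)) i) (Pel i))"
    by (simp add: y_def)
  then show ?case
    by blast
qed

theorem theorem9p5:
  shows "(\<forall>i\<ge>1. primitive (Pel i))
    \<and> (\<forall>(n::nat) (c::nat \<Rightarrow> rat). (\<Sum>i=1..n. qsmult (c i) (Pel i)) = 0 \<longrightarrow> (\<forall>i\<in>{1..n}. c i = 0))
    \<and> (\<forall>x. primitive x \<longrightarrow> (\<exists>(n::nat) (c::nat \<Rightarrow> rat). x = (\<Sum>i=1..n. qsmult (c i) (Pel i))))"
proof (intro conjI allI impI)
  fix i :: nat
  assume "i \<ge> 1"
  then show "primitive (Pel i)"
    using primitive_Pel[of "i - 1"] by simp
next
  fix n and c :: "nat \<Rightarrow> rat"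
  assume "(\<Sum>i=1..n. qsmult (c i) (Pel i)) = 0"
  then show "\<forall>i\<in>{1..n}. c i = 0"
    by (rule Pel_linear_independent)
next
  fix x
  assume "primitive x"
  moreover obtain V where "qvars x \<subseteq> {..<V}"
    by (rule qvars_nat_bounded)
  ultimately show "\<exists>n c. x = (\<Sum>i=1..n. qsmult (c i) (Pel i))"
    by (blast dest: primitive_in_span_Pel)
qed

end
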